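(* Let $\mathcal M$ be a Hilbert space of $\mathcal Y$-valued functions whose elements belong to $\mathcal H_{\mathcal Y}(k_d)$, and assume $\mathcal M$ is invariant under $M^*_{\lambda_j}$ for $j=1,\dots,d$. (1) If $\sum_{j=1}^d\|M^*_{\lambda_j}f\|^2_{\mathcal M}\le\|f\|^2_{\mathcal M}-\|f(0)\|^2_{\mathcal Y}$ for every $f\in\mathcal M$, then $\mathcal M=\operatorname{Ran}\widehat{\mathcal O}^{\mathbf a}_{C,\mathbf A}$ for a contractive pair $(C,\mathbf A)$ with $\mathbf A=(A_1,\dots,A_d)$ commutative which is exactly observable with respect to $\mathcal M$. In particular $\mathcal M$ is contractively included in $\mathcal H_{\mathcal Y}(k_d)$. (2) If $\sum_{j=1}^d\|M^*_{\lambda_j}f\|^2_{\mathcal M}=\|f\|^2_{\mathcal M}-\|f(0)\|^2_{\mathcal Y}$ for every $f\in\mathcal M$, then $\mathcal M=\operatorname{Ran}\widehat{\mathcal O}^{\mathbf a}_{C,\mathbf A}$ for an isometric pair $(C,\mathbf A)$ with $\mathbf A$ commutative which is exactly observable with respect to $\mathcal M$; $\mathcal M$ is contractively included in $\mathcal H_{\mathcal Y}(k_d)$, and it is isometrically included in $\mathcal H_{\mathcal Y}(k_d)$ if and only if $$\lim_{N\to\infty}\sum_{\mathbf n\in\mathbb Z^d_+,|\mathbf n|=N}\frac{N!}{\mathbf n!}\|(\mathbf M^*_{\boldsymbol\lambda})^{\mathbf n}f\|^2_{\mathcal M}=0\quad\text{for every }f\in\mathcal M.$$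
   Context: For $\mathbf n\in\mathbb Z^d_+$: $|\mathbf n|=\sum n_k$, $\mathbf n!=\prod n_k!$, $\boldsymbol\lambda^{\mathbf n}=\prod\lambda_k^{n_k}$. Arveson space $\mathcal H_{\mathcal Y}(k_d)$: functions $\sum_{\mathbf n}f_{\mathbf n}\boldsymbol\lambda^{\mathbf n}$ on the unit ball $\mathbb B^d$ with $\|f\|^2=\sum_{\mathbf n}\frac{\mathbf n!}{|\mathbf n|!}\|f_{\mathbf n}\|^2_{\mathcal Y}<\infty$; $M_{\lambda_j}$: multiplication by $\lambda_j$ there; $M^*_{\lambda_j}$: its adjoint in $\mathcal H_{\mathcal Y}(k_d)$; $(\mathbf M^*_{\boldsymbol\lambda})^{\mathbf n}=(M^*_{\lambda_1})^{n_1}\cdots(M^*_{\lambda_d})^{n_d}$. For a commuting tuple $\mathbf A$ on a Hilbert space $\mathcal X$ and $C\in\mathcal L(\mathcal X,\mathcal Y)$, $\widehat{\mathcal O}^{\mathbf a}_{C,\mathbf A}x=\sum_{\mathbf n}\frac{|\mathbf n|!}{\mathbf n!}(C\mathbf A^{\mathbf n}x)\boldsymbol\lambda^{\mathbf n}=C(I-\sum_j\lambda_jA_j)^{-1}x$. Contractive pair: $C^*C+\sum_jA_j^*A_j\le I$; isometric: equality. "Exactly observable with respect to $\mathcal M$" means that $\widehat{\mathcal O}^{\mathbf a}_{C,\mathbf A}$, regarded as an operator from $\mathcal X$ into $\mathcal M$, is bounded and bounded below. $\mathcal M$ is contractively (resp. isometrically) included in $\mathcal H_{\mathcal Y}(k_d)$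 if $\|f\|_{\mathcal H_{\mathcal Y}(k_d)}\le\|f\|_{\mathcal M}$ (resp. $=$) for $f\in\mathcal M$. *)

theory Defs
  imports "HOL-Analysis.Analysis"
begin

text \<open>The library only provides real inner product spaces.  A complex Hilbert space is
  modelled as a real Hilbert space (whose real inner product is the real part of the
  complex one) together with a complex scalar multiplication extending the real one and
  compatible with the norm; by polarization this is exactly a complex Hilbert space.\<close>

class chilbert = real_inner + complete_space +
  fixes scaleC :: "complex \<Rightarrow> 'a \<Rightarrow> 'a" (infixr "*\<^sub>C" 75)
  assumes scaleC_add_right: "a *\<^sub>C (x + y) = a *\<^sub>C x + a *\<^sub>C y"
    and scaleC_add_left: "(a + b) *\<^sub>C x = a *\<^sub>C x + b *\<^sub>C x"
    and scaleC_scaleC: "a *\<^sub>C (b *\<^sub>C x) = (a * b) *\<^sub>C x"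
    and scaleC_one: "1 *\<^sub>C x = x"
    and scaleR_scaleC: "r *\<^sub>R x = complex_of_real r *\<^sub>C x"
    and norm_scaleC: "norm (a *\<^sub>C x) = cmod a * norm x"

definition bclin :: "('a::chilbert \<Rightarrow> 'b::chilbert) \<Rightarrow> bool" where
  "bclin T \<longleftrightarrow> bounded_linear T \<and> (\<forall>a x. T (a *\<^sub>C x) = a *\<^sub>C T x)"

text \<open>A multi-index \<open>n \<in> \<int>\<^sup>d\<^sub>+\<close> is a function \<open>nat \<Rightarrow> nat\<close> vanishing from \<open>d\<close> on
  (coordinates \<open>0..d-1\<close> stand for \<open>1..d\<close>).  A function \<open>\<Sum> f\<^sub>n \<lambda>\<^sup>n\<close> is represented by
  its coefficient family \<open>n \<mapsto> f\<^sub>n\<close>.\<close>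

definition mi :: "nat \<Rightarrow> (nat \<Rightarrow> nat) set" where
  "mi d = {n. \<forall>j\<ge>d. n j = 0}"

definition mabs :: "nat \<Rightarrow> (nat \<Rightarrow> nat) \<Rightarrow> nat" where
  "mabs d n = (\<Sum>j<d. n j)"

definition mfact :: "nat \<Rightarrow> (nat \<Rightarrow> nat) \<Rightarrow> nat" where
  "mfact d n = (\<Prod>j<d. fact (n j))"

definition arv_w :: "nat \<Rightarrow> (nat \<Rightarrow> nat) \<Rightarrow> real" where
  "arv_w d n = real (mfact d n) / fact (mabs d n)"

definition arv :: "nat \<Rightarrow> ((nat \<Rightarrow> nat) \<Rightarrow> 'y::chilbert) set" where
  "arv d = {f. (\<forall>n. n \<notin> mi d \<longrightarrow> f n = 0) \<and>
                (\<lambda>n. arv_w d n * (norm (f n))\<^sup>2) summable_on mi d}"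

definition arv_norm :: "nat \<Rightarrow> ((nat \<Rightarrow> nat) \<Rightarrow> 'y::chilbert) \<Rightarrow> real" where
  "arv_norm d f = sqrt (\<Sum>\<^sub>\<infinity>n\<in>mi d. arv_w d n * (norm (f n))\<^sup>2)"

text \<open>Real part of the Arveson inner product.\<close>
definition arv_inner :: "nat \<Rightarrow> ((nat \<Rightarrow> nat) \<Rightarrow> 'y::chilbert) \<Rightarrow> ((nat \<Rightarrow> nat) \<Rightarrow> 'y) \<Rightarrow> real" where
  "arv_inner d f g = (\<Sum>\<^sub>\<infinity>n\<in>mi d. arv_w d n * inner (f n) (g n))"

definition mult_lam :: "nat \<Rightarrow> ((nat \<Rightarrow> nat) \<Rightarrow> 'y::chilbert) \<Rightarrow> ((nat \<Rightarrow> nat) \<Rightarrow> 'y)" where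
  "mult_lam j f = (\<lambda>n. if 0 < n j then f (n(j := n j - 1)) else 0)"

text \<open>\<open>M\<^sup>*\<^sub>\<lambda>\<^sub>j\<close>: the adjoint of \<open>M\<^sub>\<lambda>\<^sub>j\<close> in the Arveson space (for complex-linear operators the
  adjoint with respect to the real part of the inner product is the complex adjoint).\<close>
definition arv_adj :: "nat \<Rightarrow> nat \<Rightarrow> ((nat \<Rightarrow> nat) \<Rightarrow> 'y::chilbert) \<Rightarrow> ((nat \<Rightarrow> nat) \<Rightarrow> 'y)" where
  "arv_adj d j f = (THE g. g \<in> arv d \<and>
      (\<forall>h\<in>arv d. arv_inner d (mult_lam j h) f = arv_inner d h g))"

definition mpow :: "nat \<Rightarrow> (nat \<Rightarrow> 'a \<Rightarrow> 'a) \<Rightarrow> (nat \<Rightarrow> nat) \<Rightarrow> 'a \<Rightarrow> 'a" where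
  "mpow d T n = foldr (\<lambda>j g. (T j ^^ n j) \<circ> g) [0..<d] id"

definition obs :: "nat \<Rightarrow> ('x \<Rightarrow> 'y::chilbert) \<Rightarrow> (nat \<Rightarrow> 'x \<Rightarrow> 'x) \<Rightarrow> 'x \<Rightarrow> ((nat \<Rightarrow> nat) \<Rightarrow> 'y)" where
  "obs d C A x = (\<lambda>n. if n \<in> mi d
      then (fact (mabs d n) / real (mfact d n)) *\<^sub>R C (mpow d A n x) else 0)"

definition commutative_tuple :: "nat \<Rightarrow> (nat \<Rightarrow> 'x \<Rightarrow> 'x) \<Rightarrow> bool" where
  "commutative_tuple d A \<longleftrightarrow> (\<forall>i<d. \<forall>j<d. A i \<circ> A j = A j \<circ> A i)"

text \<open>\<open>C\<^sup>*C + \<Sum> A\<^sub>j\<^sup>*A\<^sub>j \<le> I\<close>, resp. \<open>= I\<close>, written out as quadratic forms.\<close>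
definition contractive_pair :: "nat \<Rightarrow> ('x::chilbert \<Rightarrow> 'y::chilbert) \<Rightarrow> (nat \<Rightarrow> 'x \<Rightarrow> 'x) \<Rightarrow> bool" where
  "contractive_pair d C A \<longleftrightarrow>
     bclin C \<and> (\<forall>j<d. bclin (A j)) \<and>
     (\<forall>x. (norm (C x))\<^sup>2 + (\<Sum>j<d. (norm (A j x))\<^sup>2) \<le> (norm x)\<^sup>2)"

definition isometric_pair :: "nat \<Rightarrow> ('x::chilbert \<Rightarrow> 'y::chilbert) \<Rightarrow> (nat \<Rightarrow> 'x \<Rightarrow> 'x) \<Rightarrow> bool" where
  "isometric_pair d C A \<longleftrightarrow>
     bclin C \<and> (\<forall>j<d. bclin (A j)) \<and>
     (\<forall>x. (norm (C x))\<^sup>2 + (\<Sum>j<d. (norm (A j x))\<^sup>2) = (norm x)\<^sup>2)"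

text \<open>The space \<open>\<M>\<close> is given as a complex Hilbert space \<open>'m\<close> together with the injective
  complex-linear map \<open>\<iota>\<close> sending an element to the function (coefficient family) it is.\<close>
definition exactly_observable ::
  "('m::chilbert \<Rightarrow> ((nat \<Rightarrow> nat) \<Rightarrow> 'y::chilbert)) \<Rightarrow> nat \<Rightarrow> ('x::chilbert \<Rightarrow> 'y) \<Rightarrow> (nat \<Rightarrow> 'x \<Rightarrow> 'x) \<Rightarrow> bool" where
  "exactly_observable \<iota> d C A \<longleftrightarrow>
     range (obs d C A) \<subseteq> range \<iota> \<and>
     (\<exists>c K. 0 < c \<and> (\<forall>x. c * norm x \<le> norm (inv \<iota> (obs d C A x)) \<and>
                           norm (inv \<iota> (obs d C A x)) \<le> K * norm x))"

definition fun_clinear :: "('m::chilbert \<Rightarrow> ((nat \<Rightarrow> nat) \<Rightarrow> 'y::chilbert)) \<Rightarrow> bool" where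
  "fun_clinear \<iota> \<longleftrightarrow> (\<forall>x y. \<iota> (x + y) = (\<lambda>n. \<iota> x n + \<iota> y n)) \<and>
                      (\<forall>a x. \<iota> (a *\<^sub>C x) = (\<lambda>n. a *\<^sub>C \<iota> x n))"

definition contractively_included :: "('m::chilbert \<Rightarrow> ((nat \<Rightarrow> nat) \<Rightarrow> 'y::chilbert)) \<Rightarrow> nat \<Rightarrow> bool" where
  "contractively_included \<iota> d \<longleftrightarrow> (\<forall>m. arv_norm d (\<iota> m) \<le> norm m)"

definition isometrically_included :: "('m::chilbert \<Rightarrow> ((nat \<Rightarrow> nat) \<Rightarrow> 'y::chilbert)) \<Rightarrow> nat \<Rightarrow> bool" where
  "isometrically_included \<iota> d \<longleftrightarrow> (\<forall>m. arv_norm d (\<iota> m) = norm m)"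

end

(*
  On coefficients, M^*_\<lambda>j is a weighted backward shift: ((M^*_\<lambda>)^s f)_k = (w_(k+s) / w_k) f_(k+s)
  with w_n = n!/|n|!.  In particular the constant coefficient of (M^*_\<lambda>)^n f is w_n f_n, so
  for A_j = M^*_\<lambda>j restricted to M and C f = f(0) the observability operator O_(C,A) is the
  identity of M: M is its range and it is isometric, hence exactly observable.

  The hypothesis says |Cf|^2 + \<Sum>_j |A_j f|^2 \<le> |f|^2.  Applying it to A_\<alpha> f for all words \<alpha>
  of length < N and summing gives
    \<Sum>_(|n|<N) w_n |f_n|^2 + \<Sum>_(|n|=N) (N!/n!) |A^n f|^2 \<le> |f|^2,
  with equality in the isometric case, since N!/n! words have letter multiplicities n and
  commutativity makes A_\<alpha> depend on these only.  As N \<rightarrow> \<infinity> the first sum tends to the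
  norm of f in the Arveson space, which gives contractive inclusion, and in the isometric
  case the defect |f|^2_M - |f|^2_Arveson is the limit of the second sum.
*)
theory Submission
  imports Defs "HOL-Library.Function_Algebras" "HOL-Combinatorics.Multiset_Permutations"
begin

declare plus_fun_apply [simp] zero_fun_apply [simp]

section \<open>Multi-indices and the Arveson weights\<close>

definition mi_unit :: "nat \<Rightarrow> nat \<Rightarrow> nat" where
  "mi_unit j = (\<lambda>i. if i = j then 1 else 0)"

lemma zero_mi [simp]: "0 \<in> mi d"
  by (simp add: mi_def)

lemma add_mi: "k \<in> mi d \<Longrightarrow> s \<in> mi d \<Longrightarrow> k + s \<in> mi d"
  by (simp add: mi_def)

lemma mi_unit_mi: "j < d \<Longrightarrow> mi_unit j \<in> mi d"
  by (simp add: mi_def mi_unit_def)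

lemma add_mi_unit: "k + mi_unit j = k(j := Suc (k j))"
  by (simp add: fun_eq_iff mi_unit_def)

lemma mabs_add: "mabs d (k + s) = mabs d k + mabs d s"
  by (simp add: mabs_def sum.distrib)

lemma mabs_unit: "j < d \<Longrightarrow> mabs d (mi_unit j) = 1"
  by (simp add: mabs_def mi_unit_def)

lemma le_mabs: "j < d \<Longrightarrow> k j \<le> mabs d k"
  unfolding mabs_def by (rule member_le_sum) auto

lemma mfact_pos: "0 < mfact d n"
  by (simp add: mfact_def prod_pos)

lemma mfact_add_unit:
  assumes "j < d"
  shows "mfact d (k + mi_unit j) = mfact d k * (k j + 1)"
proof -
  have "mfact d (k + mi_unit j) = fact (Suc (k j)) * (\<Prod>i\<in>{..<d}-{j}. fact (k i))"
    unfolding mfact_def add_mi_unit using assms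
    by (subst prod.remove[of _ j]) (auto intro!: prod.cong)
  moreover have "mfact d k = fact (k j) * (\<Prod>i\<in>{..<d}-{j}. fact (k i))"
    unfolding mfact_def using assms by (subst prod.remove[of _ j]) auto
  ultimately show ?thesis
    by (simp add: algebra_simps)
qed

lemma arv_w_pos: "0 < arv_w d n"
  using mfact_pos[of d n] by (simp add: arv_w_def)

lemma arv_w_nonzero [simp]: "arv_w d n \<noteq> 0"
  using arv_w_pos[of d n] by simp

lemma arv_w_zero [simp]: "arv_w d 0 = 1"
  by (simp add: arv_w_def mfact_def mabs_def)

lemma arv_norm_sq: "(arv_norm d f)\<^sup>2 = (\<Sum>\<^sub>\<infinity>n\<in>mi d. arv_w d n * (norm (f n))\<^sup>2)"
  by (simp add: arv_norm_def infsum_nonneg less_imp_le[OF arv_w_pos])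

lemma arv_norm_nonneg: "0 \<le> arv_norm d f"
  by (simp add: arv_norm_def infsum_nonneg less_imp_le[OF arv_w_pos])

lemma arv_w_add_unit:
  assumes "j < d"
  shows "arv_w d (k + mi_unit j) = arv_w d k * ((real (k j) + 1) / (real (mabs d k) + 1))"
proof -
  have "arv_w d (k + mi_unit j) = real (mfact d k) * (real (k j) + 1) / fact (Suc (mabs d k))"
    using assms by (simp add: arv_w_def mfact_add_unit mabs_add mabs_unit algebra_simps)
  also have "\<dots> = arv_w d k * ((real (k j) + 1) / (real (mabs d k) + 1))"
    unfolding arv_w_def fact_Suc by (simp add: field_simps)
  finally show ?thesis .
qed

lemma arv_w_add_unit_le:
  assumes "j < d"
  shows "arv_w d (k + mi_unit j) \<le> arv_w d k"
proof -
  have "(real (k j) + 1) / (real (mabs d k) + 1) \<le> 1"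
    using le_mabs[OF assms, of k] by simp
  then have "arv_w d k * ((real (k j) + 1) / (real (mabs d k) + 1)) \<le> arv_w d k * 1"
    using arv_w_pos[of d k] by (intro mult_left_mono) auto
  then show ?thesis
    using arv_w_add_unit[OF assms, of k] by linarith
qed

section \<open>The adjoints of the coordinate multipliers\<close>

text \<open>\<open>bshift d s\<close> is \<open>(M\<^sup>*\<^sub>\<lambda>)\<^sup>s\<close> written on coefficients.\<close>

definition bshift :: "nat \<Rightarrow> (nat \<Rightarrow> nat) \<Rightarrow> ((nat \<Rightarrow> nat) \<Rightarrow> 'y::real_vector) \<Rightarrow> (nat \<Rightarrow> nat) \<Rightarrow> 'y" where
  "bshift d s f = (\<lambda>k. if k \<in> mi d then (arv_w d (k + s) / arv_w d k) *\<^sub>R f (k + s) else 0)"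

lemma bshift_bshift:
  assumes "s \<in> mi d" "t \<in> mi d"
  shows "bshift d s (bshift d t f) = bshift d (s + t) f"
proof
  fix k
  show "bshift d s (bshift d t f) k = bshift d (s + t) f k"
    using assms add_mi[of k d s] by (simp add: bshift_def add.assoc)
qed

lemma bshift_zero:
  assumes "\<forall>n. n \<notin> mi d \<longrightarrow> f n = 0"
  shows "bshift d 0 f = f"
  using assms by (auto simp: bshift_def fun_eq_iff)

lemma bshift_add: "bshift d s (\<lambda>n. f n + g n) = (\<lambda>k. bshift d s f k + bshift d s g k)"
  by (auto simp: bshift_def scaleR_add_right)

lemma scaleC_zero [simp]: "a *\<^sub>C (0::'a::chilbert) = 0"
  using scaleC_add_right[of a "0::'a" 0] by simp

lemma bshift_scaleC:
  "bshift d s (\<lambda>n. a *\<^sub>C f n) = (\<lambda>k. a *\<^sub>C bshift d s f k)"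
  by (auto simp: bshift_def scaleR_scaleC scaleC_scaleC mult.commute)

lemma bshift_at_zero: "bshift d s f 0 = arv_w d s *\<^sub>R f s"
  by (simp add: bshift_def)

lemma image_add_mi_unit:
  assumes "j < d"
  shows "(\<lambda>k. k + mi_unit j) ` mi d = {n \<in> mi d. 0 < n j}"
proof (intro equalityI subsetI)
  fix n assume "n \<in> (\<lambda>k. k + mi_unit j) ` mi d"
  then show "n \<in> {n \<in> mi d. 0 < n j}"
    using assms by (auto simp: add_mi_unit mi_def)
next
  fix n assume n: "n \<in> {n \<in> mi d. 0 < n j}"
  then have "n = n(j := n j - 1) + mi_unit j" and "n(j := n j - 1) \<in> mi d"
    using assms by (auto simp: add_mi_unit mi_def)
  then show "n \<in> (\<lambda>k. k + mi_unit j) ` mi d"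
    by blast
qed

lemma mult_lam_add_mi_unit: "mult_lam j h (k + mi_unit j) = h k"
  by (simp add: mult_lam_def add_mi_unit)

lemma arv_inner_mult_lam:
  assumes "j < d"
  shows "arv_inner d (mult_lam j h) f = arv_inner d h (bshift d (mi_unit j) f)"
proof -
  let ?up = "\<lambda>k. k + mi_unit j"
  let ?g = "\<lambda>n. arv_w d n * inner (mult_lam j h n) (f n)"
  have "arv_inner d (mult_lam j h) f = infsum ?g (?up ` mi d)"
    unfolding arv_inner_def
    by (rule infsum_cong_neutral) (auto simp: image_add_mi_unit[OF assms] mult_lam_def)
  also have "\<dots> = infsum (?g \<circ> ?up) (mi d)"
    by (rule infsum_reindex) (simp add: inj_on_def)
  also have "\<dots> = arv_inner d h (bshift d (mi_unit j) f)"
    unfolding arv_inner_def by (rule infsum_cong) (simp add: mult_lam_add_mi_unit bshift_def)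
  finally show ?thesis .
qed

lemma bshift_unit_arv:
  assumes j: "j < d" and f: "f \<in> arv d"
  shows "bshift d (mi_unit j) f \<in> arv d"
proof -
  let ?up = "\<lambda>k. k + mi_unit j"
  let ?F = "\<lambda>n. arv_w d n * (norm (f n))\<^sup>2"
  have "?F summable_on mi d"
    using f by (simp add: arv_def)
  then have "?F summable_on ?up ` mi d"
    by (rule summable_on_subset_banach) (auto simp: image_add_mi_unit[OF j])
  then have summable: "(?F \<circ> ?up) summable_on mi d"
    by (subst summable_on_reindex[symmetric]) (simp add: inj_on_def)
  have "arv_w d k * (norm (bshift d (mi_unit j) f k))\<^sup>2 \<le> ?F (?up k)" if "k \<in> mi d" for k
  proof -
    have "arv_w d k * (norm (bshift d (mi_unit j) f k))\<^sup>2 = (arv_w d (?up k) / arv_w d k) * ?F (?up k)"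
      using that arv_w_pos[of d k] arv_w_pos[of d "?up k"]
      by (simp add: bshift_def abs_of_pos power2_eq_square)
    also have "\<dots> \<le> 1 * ?F (?up k)"
      using arv_w_add_unit_le[OF j, of k] arv_w_pos[of d k] arv_w_pos[of d "?up k"]
      by (intro mult_right_mono) (auto simp: less_imp_le)
    finally show ?thesis by simp
  qed
  then have "(\<lambda>k. arv_w d k * (norm (bshift d (mi_unit j) f k))\<^sup>2) summable_on mi d"
    by (intro summable_on_comparison_test[OF summable]) (auto simp: less_imp_le[OF arv_w_pos])
  then show ?thesis
    by (simp add: arv_def bshift_def)
qed

lemma single_arv:
  assumes "k \<in> mi d"
  shows "(\<lambda>n. if n = k then y else 0) \<in> arv d"
proof -
  have "(\<lambda>n. arv_w d n * (norm (if n = k then y else 0))\<^sup>2) summable_on {k}"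
    by simp
  then have "(\<lambda>n. arv_w d n * (norm (if n = k then y else 0))\<^sup>2) summable_on mi d"
    by (rule summable_on_cong_neutral[THEN iffD1, rotated -1]) (use assms in auto)
  then show ?thesis
    using assms by (auto simp: arv_def)
qed

lemma arv_inner_single:
  assumes "k \<in> mi d"
  shows "arv_inner d (\<lambda>n. if n = k then y else 0) g = arv_w d k * inner y (g k)"
proof -
  have "arv_inner d (\<lambda>n. if n = k then y else 0) g
      = (\<Sum>\<^sub>\<infinity>n\<in>{k}. arv_w d n * inner (if n = k then y else 0) (g n))"
    unfolding arv_inner_def by (rule infsum_cong_neutral) (use assms in auto)
  then show ?thesis
    by simp
qed

lemma arv_eqI:
  assumes "f \<in> arv d" "g \<in> arv d" and "\<forall>h\<in>arv d. arv_inner d h f = arv_inner d h g"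
  shows "f = g"
proof
  fix k
  show "f k = g k"
  proof (cases "k \<in> mi d")
    case True
    let ?y = "f k - g k"
    have "arv_w d k * inner ?y (f k) = arv_w d k * inner ?y (g k)"
      using assms(3) single_arv[OF True, of ?y] arv_inner_single[OF True] by metis
    then have "inner ?y ?y = 0"
      by (simp add: inner_diff_right)
    then show ?thesis
      by simp
  qed (use assms in \<open>simp add: arv_def\<close>)
qed

lemma arv_adj_eq_bshift:
  assumes "j < d" and "f \<in> arv d"
  shows "arv_adj d j f = bshift d (mi_unit j) f"
  unfolding arv_adj_def
proof (rule the_equality)
  show "bshift d (mi_unit j) f \<in> arv d \<and>
      (\<forall>h\<in>arv d. arv_inner d (mult_lam j h) f = arv_inner d h (bshift d (mi_unit j) f))"
    using assms by (simp add: bshift_unit_arv arv_inner_mult_lam)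
next
  fix g assume "g \<in> arv d \<and> (\<forall>h\<in>arv d. arv_inner d (mult_lam j h) f = arv_inner d h g)"
  then show "g = bshift d (mi_unit j) f"
    using assms by (intro arv_eqI) (auto simp: bshift_unit_arv arv_inner_mult_lam)
qed

section \<open>Words and multinomial counting\<close>

definition word_op :: "(nat \<Rightarrow> 'a \<Rightarrow> 'a) \<Rightarrow> nat list \<Rightarrow> 'a \<Rightarrow> 'a" where
  "word_op A \<alpha> = foldr (\<lambda>j g. A j \<circ> g) \<alpha> id"

lemma word_op_Nil [simp]: "word_op A [] = id"
  by (simp add: word_op_def)

lemma word_op_Cons [simp]: "word_op A (j # \<alpha>) = A j \<circ> word_op A \<alpha>"
  by (simp add: word_op_def)

lemma word_op_append: "word_op A (\<alpha> @ \<beta>) = word_op A \<alpha> \<circ> word_op A \<beta>"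
  by (induction \<alpha>) (simp_all add: comp_assoc)

lemma word_op_replicate: "word_op A (replicate k j) = A j ^^ k"
  by (induction k) simp_all

lemma word_op_conj:
  assumes "\<And>j x. j \<in> set \<alpha> \<Longrightarrow> T j (\<iota> x) = \<iota> (A j x)"
  shows "word_op T \<alpha> (\<iota> x) = \<iota> (word_op A \<alpha> x)"
  using assms by (induction \<alpha>) simp_all

definition index_word :: "nat \<Rightarrow> (nat \<Rightarrow> nat) \<Rightarrow> nat list" where
  "index_word d n = concat (map (\<lambda>j. replicate (n j) j) [0..<d])"

lemma mpow_eq_word_op: "mpow d A n = word_op A (index_word d n)"
proof -
  have "foldr (\<lambda>j g. (A j ^^ n j) \<circ> g) js id = word_op A (concat (map (\<lambda>j. replicate (n j) j) js))"
    for js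
    by (induction js) (simp_all add: word_op_append word_op_replicate)
  then show ?thesis
    by (simp add: mpow_def index_word_def)
qed

lemma mpow_conj:
  assumes "\<And>j x. j < d \<Longrightarrow> T j (\<iota> x) = \<iota> (A j x)"
  shows "mpow d T n (\<iota> x) = \<iota> (mpow d A n x)"
  unfolding mpow_eq_word_op using assms by (intro word_op_conj) (auto simp: index_word_def)

lemma set_index_word: "set (index_word d n) \<subseteq> {..<d}"
  by (auto simp: index_word_def)

lemma count_index_word:
  assumes "n \<in> mi d"
  shows "count (mset (index_word d n)) = n"
proof -
  have "count (mset (concat (map (\<lambda>j. replicate (n j) j) js))) i = (if i \<in> set js then n i else 0)"
    if "distinct js" for js i
    using that by (induction js) auto
  then show ?thesis
    using assms by (auto simp: index_word_def mi_def fun_eq_iff)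
qed

definition words :: "nat \<Rightarrow> nat \<Rightarrow> nat list set" where
  "words d N = {\<alpha>. set \<alpha> \<subseteq> {..<d} \<and> length \<alpha> = N}"

lemma finite_words: "finite (words d N)"
  unfolding words_def by (rule finite_lists_length_eq) simp

lemma words_0: "words d 0 = {[]}"
  by (auto simp: words_def)

lemma words_Suc: "words d (Suc N) = (\<lambda>(j, \<alpha>). j # \<alpha>) ` ({..<d} \<times> words d N)"
proof (intro equalityI subsetI)
  fix \<beta> assume "\<beta> \<in> words d (Suc N)"
  then show "\<beta> \<in> (\<lambda>(j, \<alpha>). j # \<alpha>) ` ({..<d} \<times> words d N)"
    by (cases \<beta>) (auto simp: words_def)
qed (auto simp: words_def)

lemma sum_words_Suc:
  "(\<Sum>\<beta>\<in>words d (Suc N). g \<beta>) = (\<Sum>\<alpha>\<in>words d N. \<Sum>j<d. g (j # \<alpha>))"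
proof -
  have "inj_on (\<lambda>(j, \<alpha>). j # \<alpha>) ({..<d} \<times> words d N)"
    by (auto simp: inj_on_def)
  then have "(\<Sum>\<beta>\<in>words d (Suc N). g \<beta>) = (\<Sum>j<d. \<Sum>\<alpha>\<in>words d N. g (j # \<alpha>))"
    by (simp add: words_Suc sum.reindex sum.cartesian_product split_def)
  then show ?thesis
    by (simp add: sum.swap[of _ "{..<d}"])
qed

definition mi_level :: "nat \<Rightarrow> nat \<Rightarrow> (nat \<Rightarrow> nat) set" where
  "mi_level d N = {n \<in> mi d. mabs d n = N}"

lemma finite_mi_level: "finite (mi_level d N)"
proof (rule finite_subset)
  show "mi_level d N \<subseteq> {n. \<forall>j. (j \<in> {..<d} \<longrightarrow> n j \<in> {..N}) \<and> (j \<notin> {..<d} \<longrightarrow> n j = 0)}"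
  proof (intro subsetI CollectI allI conjI impI)
    fix n j assume "n \<in> mi_level d N"
    then show "j \<in> {..<d} \<Longrightarrow> n j \<in> {..N}" and "j \<notin> {..<d} \<Longrightarrow> n j = 0"
      using le_mabs[of j d n] by (auto simp: mi_level_def mi_def)
  qed
  show "finite {n. \<forall>j. (j \<in> {..<d} \<longrightarrow> n j \<in> {..N}) \<and> (j \<notin> {..<d} \<longrightarrow> n j = (0::nat))}"
    by (rule finite_set_of_finite_funs) auto
qed

lemma count_mset_mi: "set \<alpha> \<subseteq> {..<d} \<Longrightarrow> count (mset \<alpha>) \<in> mi d"
  by (auto simp: mi_def count_eq_zero_iff)

lemma mabs_count_mset: "set \<alpha> \<subseteq> {..<d} \<Longrightarrow> mabs d (count (mset \<alpha>)) = length \<alpha>"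
proof (induction \<alpha>)
  case (Cons j \<alpha>)
  have "count (mset (j # \<alpha>)) = mi_unit j + count (mset \<alpha>)"
    by (simp add: fun_eq_iff mi_unit_def)
  then have "mabs d (count (mset (j # \<alpha>))) = mabs d (mi_unit j) + mabs d (count (mset \<alpha>))"
    by (simp only: mabs_add)
  also have "\<dots> = length (j # \<alpha>)"
    using Cons by (simp add: mabs_unit)
  finally show ?case .
qed (simp add: mabs_def)

lemma count_mset_mi_level: "\<alpha> \<in> words d N \<Longrightarrow> count (mset \<alpha>) \<in> mi_level d N"
  by (simp add: words_def mi_level_def count_mset_mi mabs_count_mset)

lemma card_words_with_count:
  assumes n: "n \<in> mi_level d N"
  shows "card {\<alpha> \<in> words d N. count (mset \<alpha>) = n} * mfact d n = fact N"
proof -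
  have support: "0 < n j \<Longrightarrow> j < d" for j
    using n by (auto simp: mi_level_def mi_def not_less[symmetric])
  define M where "M = Abs_multiset n"
  have count_M: "count M = n"
    unfolding M_def by (rule count_Abs_multiset) (use support in \<open>auto intro: finite_subset[of _ "{..<d}"]\<close>)
  have set_M: "set_mset M \<subseteq> {..<d}"
    using support by (auto simp: count_M simp flip: count_greater_zero_iff)
  have fiber: "{\<alpha> \<in> words d N. count (mset \<alpha>) = n} = permutations_of_multiset M"
  proof (intro equalityI subsetI)
    fix \<alpha> assume "\<alpha> \<in> {\<alpha> \<in> words d N. count (mset \<alpha>) = n}"
    then show "\<alpha> \<in> permutations_of_multiset M"
      by (auto simp: permutations_of_multiset_def count_M intro: multiset_eqI)
  next
    fix \<alpha> assume "\<alpha> \<in> permutations_of_multiset M"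
    then have \<alpha>: "mset \<alpha> = M"
      by (simp add: permutations_of_multiset_def)
    then have "set \<alpha> \<subseteq> {..<d}"
      using set_M by (metis set_mset_mset)
    then show "\<alpha> \<in> {\<alpha> \<in> words d N. count (mset \<alpha>) = n}"
      using n \<alpha> mabs_count_mset[of \<alpha> d] by (simp add: words_def mi_level_def count_M)
  qed
  obtain \<alpha> where "mset \<alpha> = M"
    using ex_mset by blast
  then have "size M = N"
    using fiber by (auto simp: permutations_of_multiset_def words_def)
  moreover have "(\<Prod>x\<in>set_mset M. fact (count M x)) = mfact d n"
    unfolding mfact_def count_M
    by (rule prod.mono_neutral_left) (use set_M in \<open>auto simp flip: count_M simp: not_in_iff\<close>)
  ultimately show ?thesis
    using card_permutations_of_multiset_aux[of M] by (simp add: fiber)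
qed

lemma sum_words_by_count:
  "(\<Sum>\<alpha>\<in>words d N. g (count (mset \<alpha>))) = (\<Sum>n\<in>mi_level d N. (fact N / mfact d n) * g n)"
proof -
  have "(\<Sum>\<alpha>\<in>words d N. g (count (mset \<alpha>)))
      = (\<Sum>n\<in>mi_level d N. \<Sum>\<alpha>\<in>{\<alpha> \<in> words d N. count (mset \<alpha>) = n}. g (count (mset \<alpha>)))"
    by (rule sum.group[symmetric]) (auto simp: finite_words finite_mi_level count_mset_mi_level)
  also have "\<dots> = (\<Sum>n\<in>mi_level d N. (fact N / mfact d n) * g n)"
  proof (rule sum.cong)
    fix n assume "n \<in> mi_level d N"
    then have "real (card {\<alpha> \<in> words d N. count (mset \<alpha>) = n}) = fact N / mfact d n"
      using card_words_with_count[of n d N] mfact_pos[of d n]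
      by (simp add: eq_divide_eq flip: of_nat_mult)
    then show "(\<Sum>\<alpha>\<in>{\<alpha> \<in> words d N. count (mset \<alpha>) = n}. g (count (mset \<alpha>)))
        = (fact N / mfact d n) * g n"
      by simp
  qed simp
  finally show ?thesis .
qed

lemma tendsto_sum_mi_levels:
  fixes g :: "(nat \<Rightarrow> nat) \<Rightarrow> 'a::{topological_comm_monoid_add, t2_space}"
  assumes "g summable_on mi d"
  shows "(\<lambda>N. \<Sum>k<N. \<Sum>n\<in>mi_level d k. g n) \<longlonglongrightarrow> infsum g (mi d)"
proof -
  define below where "below N = {n \<in> mi d. mabs d n < N}" for N
  have finite_below: "finite (below N)" for N
  proof -
    have "below N = (\<Union>k<N. mi_level d k)"
      by (auto simp: below_def mi_level_def)
    then show ?thesis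
      by (simp add: finite_mi_level)
  qed
  have sum_below: "sum g (below N) = (\<Sum>k<N. \<Sum>n\<in>mi_level d k. g n)" for N
  proof -
    have "sum g (below N) = (\<Sum>k<N. \<Sum>n\<in>{n \<in> below N. mabs d n = k}. g n)"
      by (rule sum.group[OF finite_below finite_lessThan, symmetric]) (auto simp: below_def)
    also have "\<dots> = (\<Sum>k<N. \<Sum>n\<in>mi_level d k. g n)"
      by (intro sum.cong) (auto simp: below_def mi_level_def)
    finally show ?thesis .
  qed
  have "filterlim below (finite_subsets_at_top (mi d)) sequentially"
    unfolding filterlim_finite_subsets_at_top
  proof (intro allI impI)
    fix X assume X: "finite X \<and> X \<subseteq> mi d"
    have "X \<subseteq> below N" if "(\<Sum>n\<in>X. mabs d n) < N" for N
      using X that member_le_sum[of _ X "mabs d"] by (fastforce simp: below_def)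
    then show "\<forall>\<^sub>F N in sequentially. finite (below N) \<and> X \<subseteq> below N \<and> below N \<subseteq> mi d"
      using finite_below by (intro eventually_mono[OF eventually_gt_at_top]) (auto simp: below_def)
  qed
  moreover have "(sum g \<longlongrightarrow> infsum g (mi d)) (finite_subsets_at_top (mi d))"
    using has_sum_infsum[OF assms] by (simp add: has_sum_def)
  ultimately show ?thesis
    using filterlim_compose by (fastforce simp: sum_below)
qed

section \<open>Iterating the defect inequality along words\<close>

lemma word_energy_le:
  fixes A :: "nat \<Rightarrow> 'a::real_normed_vector \<Rightarrow> 'a" and C :: "'a \<Rightarrow> 'b::real_normed_vector"
  assumes "\<And>x. (norm (C x))\<^sup>2 + (\<Sum>j<d. (norm (A j x))\<^sup>2) \<le> (norm x)\<^sup>2"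
  shows "(\<Sum>k<N. \<Sum>\<alpha>\<in>words d k. (norm (C (word_op A \<alpha> x)))\<^sup>2)
           + (\<Sum>\<alpha>\<in>words d N. (norm (word_op A \<alpha> x))\<^sup>2) \<le> (norm x)\<^sup>2"
proof (induction N)
  case (Suc N)
  have "(\<Sum>\<alpha>\<in>words d (Suc N). (norm (word_op A \<alpha> x))\<^sup>2)
      \<le> (\<Sum>\<alpha>\<in>words d N. (norm (word_op A \<alpha> x))\<^sup>2 - (norm (C (word_op A \<alpha> x)))\<^sup>2)"
    unfolding sum_words_Suc by (intro sum_mono) (use assms in \<open>simp add: algebra_simps\<close>)
  with Suc.IH show ?case
    by (simp add: sum_subtractf)
qed (simp add: words_0)

lemma word_energy_eq:
  fixes A :: "nat \<Rightarrow> 'a::real_normed_vector \<Rightarrow> 'a" and C :: "'a \<Rightarrow> 'b::real_normed_vector"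
  assumes "\<And>x. (norm (C x))\<^sup>2 + (\<Sum>j<d. (norm (A j x))\<^sup>2) = (norm x)\<^sup>2"
  shows "(\<Sum>k<N. \<Sum>\<alpha>\<in>words d k. (norm (C (word_op A \<alpha> x)))\<^sup>2)
           + (\<Sum>\<alpha>\<in>words d N. (norm (word_op A \<alpha> x))\<^sup>2) = (norm x)\<^sup>2"
proof (induction N)
  case (Suc N)
  have "(\<Sum>\<alpha>\<in>words d (Suc N). (norm (word_op A \<alpha> x))\<^sup>2)
      = (\<Sum>\<alpha>\<in>words d N. (norm (word_op A \<alpha> x))\<^sup>2 - (norm (C (word_op A \<alpha> x)))\<^sup>2)"
    unfolding sum_words_Suc by (intro sum.cong) (use assms in \<open>simp_all add: algebra_simps\<close>)
  with Suc.IH show ?case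
    by (simp add: sum_subtractf)
qed (simp add: words_0)

section \<open>The realization by backward shifts\<close>

lemma bclinI:
  fixes T :: "'a::chilbert \<Rightarrow> 'b::chilbert"
  assumes "\<And>x y. T (x + y) = T x + T y" and "\<And>a x. T (a *\<^sub>C x) = a *\<^sub>C T x"
    and "\<And>x. norm (T x) \<le> norm x * K"
  shows "bclin T"
  unfolding bclin_def using assms by (auto intro!: bounded_linear_intro[where K = K] simp: scaleR_scaleC)

lemma contractive_pair_if_isometric: "isometric_pair d C A \<Longrightarrow> contractive_pair d C A"
  by (simp add: isometric_pair_def contractive_pair_def)

locale backward_shift_invariant =
  fixes d :: nat and \<iota> :: "'m::chilbert \<Rightarrow> (nat \<Rightarrow> nat) \<Rightarrow> 'y::chilbert"
  assumes lin: "fun_clinear \<iota>" and inj: "inj \<iota>" and range_arv: "range \<iota> \<subseteq> arv d"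
    and adj_invariant: "\<forall>j<d. \<forall>m. arv_adj d j (\<iota> m) \<in> range \<iota>"
begin

text \<open>The pair of the theorem: \<open>A\<^sub>j\<close> is \<open>M\<^sup>*\<^sub>\<lambda>\<^sub>j\<close> restricted to \<open>\<M>\<close> and \<open>C f = f(0)\<close>, the
  coefficient at the zero multi-index.\<close>

definition adj_op :: "nat \<Rightarrow> 'm \<Rightarrow> 'm" where
  "adj_op j x = inv \<iota> (arv_adj d j (\<iota> x))"

definition eval_origin :: "'m \<Rightarrow> 'y" where
  "eval_origin x = \<iota> x 0"

lemma embedding_arv: "\<iota> x \<in> arv d"
  using range_arv by auto

lemma embedding_vanishes: "n \<notin> mi d \<Longrightarrow> \<iota> x n = 0"
  using embedding_arv[of x] by (simp add: arv_def)

lemma embedding_add: "\<iota> (x + y) = (\<lambda>n. \<iota> x n + \<iota> y n)"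
  using lin by (simp add: fun_clinear_def)

lemma embedding_scaleC: "\<iota> (a *\<^sub>C x) = (\<lambda>n. a *\<^sub>C \<iota> x n)"
  using lin by (simp add: fun_clinear_def)

lemma arv_adj_embedding: "j < d \<Longrightarrow> arv_adj d j (\<iota> x) = \<iota> (adj_op j x)"
  using adj_invariant by (simp add: adj_op_def f_inv_into_f)

lemma embedding_adj_op: "j < d \<Longrightarrow> \<iota> (adj_op j x) = bshift d (mi_unit j) (\<iota> x)"
  using arv_adj_embedding arv_adj_eq_bshift[OF _ embedding_arv] by metis

lemma embedding_word_op:
  "set \<alpha> \<subseteq> {..<d} \<Longrightarrow> \<iota> (word_op adj_op \<alpha> x) = bshift d (count (mset \<alpha>)) (\<iota> x)"
proof (induction \<alpha>)
  case Nil
  have "count (mset []) = 0"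
    by (simp add: fun_eq_iff)
  moreover have "bshift d 0 (\<iota> x) = \<iota> x"
    using embedding_vanishes by (simp add: bshift_zero)
  ultimately show ?case
    by (metis word_op_Nil id_apply)
next
  case (Cons j \<alpha>)
  then have "\<iota> (word_op adj_op (j # \<alpha>) x) = bshift d (mi_unit j) (bshift d (count (mset \<alpha>)) (\<iota> x))"
    by (simp add: embedding_adj_op)
  also have "\<dots> = bshift d (mi_unit j + count (mset \<alpha>)) (\<iota> x)"
    using Cons.prems by (simp add: bshift_bshift mi_unit_mi count_mset_mi)
  also have "mi_unit j + count (mset \<alpha>) = count (mset (j # \<alpha>))"
    by (simp add: fun_eq_iff mi_unit_def)
  finally show ?case .
qed

lemma embedding_mpow: "n \<in> mi d \<Longrightarrow> \<iota> (mpow d adj_op n x) = bshift d n (\<iota> x)"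
  by (simp add: mpow_eq_word_op embedding_word_op set_index_word count_index_word)

lemma word_op_eq_mpow:
  "set \<alpha> \<subseteq> {..<d} \<Longrightarrow> word_op adj_op \<alpha> x = mpow d adj_op (count (mset \<alpha>)) x"
  by (rule injD[OF inj]) (simp add: embedding_word_op embedding_mpow count_mset_mi)

lemma mpow_arv_adj_embedding: "mpow d (arv_adj d) n (\<iota> x) = \<iota> (mpow d adj_op n x)"
  by (rule mpow_conj) (simp add: arv_adj_embedding)

lemma adj_op_add: "j < d \<Longrightarrow> adj_op j (x + y) = adj_op j x + adj_op j y"
  by (rule injD[OF inj]) (simp add: embedding_adj_op embedding_add bshift_add)

lemma adj_op_scaleC: "j < d \<Longrightarrow> adj_op j (a *\<^sub>C x) = a *\<^sub>C adj_op j x"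
  by (rule injD[OF inj]) (simp add: embedding_adj_op embedding_scaleC bshift_scaleC)

lemma eval_origin_add: "eval_origin (x + y) = eval_origin x + eval_origin y"
  by (simp add: eval_origin_def embedding_add)

lemma eval_origin_scaleC: "eval_origin (a *\<^sub>C x) = a *\<^sub>C eval_origin x"
  by (simp add: eval_origin_def embedding_scaleC)

lemma commutative_tuple_adj_op: "commutative_tuple d adj_op"
  unfolding commutative_tuple_def
proof (intro allI impI ext)
  fix i j x assume "i < d" "j < d"
  then show "(adj_op i \<circ> adj_op j) x = (adj_op j \<circ> adj_op i) x"
    by (intro injD[OF inj]) (simp add: embedding_adj_op bshift_bshift mi_unit_mi add.commute)
qed

lemma obs_eq_embedding: "obs d eval_origin adj_op = \<iota>"
proof (intro ext)
  fix x n
  show "obs d eval_origin adj_op x n = \<iota> x n"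
  proof (cases "n \<in> mi d")
    case True
    then have "eval_origin (mpow d adj_op n x) = arv_w d n *\<^sub>R \<iota> x n"
      by (simp add: eval_origin_def embedding_mpow bshift_at_zero)
    moreover have "fact (mabs d n) / real (mfact d n) * arv_w d n = 1"
      using mfact_pos[of d n] by (simp add: arv_w_def)
    ultimately show ?thesis
      using True by (simp add: obs_def)
  qed (simp add: obs_def embedding_vanishes)
qed

lemma exactly_observable_embedding: "exactly_observable \<iota> d eval_origin adj_op"
  unfolding exactly_observable_def obs_eq_embedding using inj by (intro conjI exI[of _ 1]) auto

lemma contractive_pair_adj_op_iff:
  "contractive_pair d eval_origin adj_op \<longleftrightarrow>
     (\<forall>x. (norm (eval_origin x))\<^sup>2 + (\<Sum>j<d. (norm (adj_op j x))\<^sup>2) \<le> (norm x)\<^sup>2)"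
proof
  assume ineq: "\<forall>x. (norm (eval_origin x))\<^sup>2 + (\<Sum>j<d. (norm (adj_op j x))\<^sup>2) \<le> (norm x)\<^sup>2"
  have "(norm (eval_origin x))\<^sup>2 \<le> (norm x)\<^sup>2" for x
  proof -
    have "0 \<le> (\<Sum>j<d. (norm (adj_op j x))\<^sup>2)"
      by (simp add: sum_nonneg)
    then show ?thesis
      using ineq[rule_format, of x] by linarith
  qed
  then have "norm (eval_origin x) \<le> norm x * 1" for x
    using power2_le_imp_le by simp
  then have "bclin eval_origin"
    by (intro bclinI eval_origin_add eval_origin_scaleC)
  moreover have "(norm (adj_op j x))\<^sup>2 \<le> (norm x)\<^sup>2" if "j < d" for j x
  proof -
    have "(norm (adj_op j x))\<^sup>2 \<le> (\<Sum>j<d. (norm (adj_op j x))\<^sup>2)"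
      using that by (intro member_le_sum) auto
    then show ?thesis
      using ineq[rule_format, of x] zero_le_power2[of "norm (eval_origin x)"] by linarith
  qed
  then have "norm (adj_op j x) \<le> norm x * 1" if "j < d" for j x
    using that power2_le_imp_le by simp
  then have "bclin (adj_op j)" if "j < d" for j
    using that by (intro bclinI adj_op_add adj_op_scaleC)
  ultimately show "contractive_pair d eval_origin adj_op"
    using ineq by (simp add: contractive_pair_def)
qed (simp add: contractive_pair_def)

lemma isometric_pair_adj_op_iff:
  "isometric_pair d eval_origin adj_op \<longleftrightarrow>
     (\<forall>x. (norm (eval_origin x))\<^sup>2 + (\<Sum>j<d. (norm (adj_op j x))\<^sup>2) = (norm x)\<^sup>2)"
  using contractive_pair_adj_op_iff by (auto simp: isometric_pair_def contractive_pair_def)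

lemma sum_words_eval_origin:
  "(\<Sum>\<alpha>\<in>words d k. (norm (eval_origin (word_op adj_op \<alpha> x)))\<^sup>2)
     = (\<Sum>n\<in>mi_level d k. arv_w d n * (norm (\<iota> x n))\<^sup>2)"
proof -
  have "(\<Sum>\<alpha>\<in>words d k. (norm (eval_origin (word_op adj_op \<alpha> x)))\<^sup>2)
      = (\<Sum>\<alpha>\<in>words d k. (\<lambda>n. (arv_w d n)\<^sup>2 * (norm (\<iota> x n))\<^sup>2) (count (mset \<alpha>)))"
    by (intro sum.cong)
       (auto simp: words_def eval_origin_def embedding_word_op bshift_at_zero power_mult_distrib
         abs_of_pos arv_w_pos)
  also have "\<dots> = (\<Sum>n\<in>mi_level d k. fact k / mfact d n * ((arv_w d n)\<^sup>2 * (norm (\<iota> x n))\<^sup>2))"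
    by (rule sum_words_by_count)
  also have "\<dots> = (\<Sum>n\<in>mi_level d k. arv_w d n * (norm (\<iota> x n))\<^sup>2)"
  proof (intro sum.cong refl)
    fix n assume "n \<in> mi_level d k"
    then have "fact k / mfact d n * arv_w d n = 1"
      using mfact_pos[of d n] by (simp add: mi_level_def arv_w_def)
    then show "fact k / mfact d n * ((arv_w d n)\<^sup>2 * (norm (\<iota> x n))\<^sup>2) = arv_w d n * (norm (\<iota> x n))\<^sup>2"
      by (simp add: power2_eq_square algebra_simps)
  qed
  finally show ?thesis .
qed

lemma sum_words_adj_op:
  "(\<Sum>\<alpha>\<in>words d N. (norm (word_op adj_op \<alpha> x))\<^sup>2)
     = (\<Sum>n\<in>mi_level d N. fact N / mfact d n * (norm (mpow d adj_op n x))\<^sup>2)"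
proof -
  have "(\<Sum>\<alpha>\<in>words d N. (norm (word_op adj_op \<alpha> x))\<^sup>2)
      = (\<Sum>\<alpha>\<in>words d N. (\<lambda>n. (norm (mpow d adj_op n x))\<^sup>2) (count (mset \<alpha>)))"
    by (intro sum.cong) (auto simp: words_def word_op_eq_mpow)
  also have "\<dots> = (\<Sum>n\<in>mi_level d N. fact N / mfact d n * (norm (mpow d adj_op n x))\<^sup>2)"
    by (rule sum_words_by_count)
  finally show ?thesis .
qed

lemma tendsto_arv_norm_sq:
  "(\<lambda>N. \<Sum>k<N. \<Sum>\<alpha>\<in>words d k. (norm (eval_origin (word_op adj_op \<alpha> x)))\<^sup>2)
     \<longlonglongrightarrow> (arv_norm d (\<iota> x))\<^sup>2"
proof -
  have "(\<lambda>n. arv_w d n * (norm (\<iota> x n))\<^sup>2) summable_on mi d"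
    using embedding_arv by (simp add: arv_def)
  then show ?thesis
    unfolding sum_words_eval_origin arv_norm_sq by (rule tendsto_sum_mi_levels)
qed

lemma contractively_included_if_contractive:
  assumes "contractive_pair d eval_origin adj_op"
  shows "contractively_included \<iota> d"
  unfolding contractively_included_def
proof
  fix x
  have ineq: "(norm (eval_origin y))\<^sup>2 + (\<Sum>j<d. (norm (adj_op j y))\<^sup>2) \<le> (norm y)\<^sup>2" for y
    using assms by (simp add: contractive_pair_adj_op_iff)
  have "(\<Sum>k<N. \<Sum>\<alpha>\<in>words d k. (norm (eval_origin (word_op adj_op \<alpha> x)))\<^sup>2) \<le> (norm x)\<^sup>2" for N
  proof -
    have "0 \<le> (\<Sum>\<alpha>\<in>words d N. (norm (word_op adj_op \<alpha> x))\<^sup>2)"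
      by (simp add: sum_nonneg)
    then show ?thesis
      using word_energy_le[OF ineq, where N = N and x = x] by linarith
  qed
  then have "(arv_norm d (\<iota> x))\<^sup>2 \<le> (norm x)\<^sup>2"
    by (intro LIMSEQ_le_const2[OF tendsto_arv_norm_sq]) auto
  then show "arv_norm d (\<iota> x) \<le> norm x"
    by (rule power2_le_imp_le) simp
qed

lemma tendsto_mpow_energy:
  assumes "isometric_pair d eval_origin adj_op"
  shows "(\<lambda>N. \<Sum>n\<in>mi_level d N. fact N / mfact d n * (norm (mpow d adj_op n x))\<^sup>2)
           \<longlonglongrightarrow> (norm x)\<^sup>2 - (arv_norm d (\<iota> x))\<^sup>2"
proof -
  have eq: "(norm (eval_origin y))\<^sup>2 + (\<Sum>j<d. (norm (adj_op j y))\<^sup>2) = (norm y)\<^sup>2" for y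
    using assms by (simp add: isometric_pair_adj_op_iff)
  let ?S = "\<lambda>N. \<Sum>k<N. \<Sum>\<alpha>\<in>words d k. (norm (eval_origin (word_op adj_op \<alpha> x)))\<^sup>2"
  have "(\<lambda>N. \<Sum>n\<in>mi_level d N. fact N / mfact d n * (norm (mpow d adj_op n x))\<^sup>2)
      = (\<lambda>N. (norm x)\<^sup>2 - ?S N)"
  proof
    fix N
    show "(\<Sum>n\<in>mi_level d N. fact N / mfact d n * (norm (mpow d adj_op n x))\<^sup>2) = (norm x)\<^sup>2 - ?S N"
      using word_energy_eq[OF eq, where N = N and x = x] sum_words_adj_op[where N = N and x = x]
      by linarith
  qed
  moreover have "(\<lambda>N. (norm x)\<^sup>2 - ?S N) \<longlonglongrightarrow> (norm x)\<^sup>2 - (arv_norm d (\<iota> x))\<^sup>2"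
    by (intro tendsto_diff tendsto_const tendsto_arv_norm_sq)
  ultimately show ?thesis
    by simp
qed

lemma isometrically_included_iff:
  assumes "isometric_pair d eval_origin adj_op"
  shows "isometrically_included \<iota> d \<longleftrightarrow>
    (\<forall>x. (\<lambda>N. \<Sum>n\<in>mi_level d N. fact N / mfact d n * (norm (mpow d adj_op n x))\<^sup>2) \<longlonglongrightarrow> 0)"
proof -
  have "arv_norm d (\<iota> x) = norm x \<longleftrightarrow>
    (\<lambda>N. \<Sum>n\<in>mi_level d N. fact N / mfact d n * (norm (mpow d adj_op n x))\<^sup>2) \<longlonglongrightarrow> 0" for x
  proof -
    note lim = tendsto_mpow_energy[OF assms, of x]
    have "arv_norm d (\<iota> x) = norm x \<longleftrightarrow> (arv_norm d (\<iota> x))\<^sup>2 = (norm x)\<^sup>2"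
      by (rule power2_eq_iff_nonneg[symmetric]) (simp_all add: arv_norm_nonneg)
    also have "\<dots> \<longleftrightarrow> (norm x)\<^sup>2 - (arv_norm d (\<iota> x))\<^sup>2 = 0"
      by (metis eq_iff_diff_eq_0)
    also have "\<dots> \<longleftrightarrow> (\<lambda>N. \<Sum>n\<in>mi_level d N. fact N / mfact d n * (norm (mpow d adj_op n x))\<^sup>2) \<longlonglongrightarrow> 0"
    proof
      assume "(norm x)\<^sup>2 - (arv_norm d (\<iota> x))\<^sup>2 = 0"
      with lim show "(\<lambda>N. \<Sum>n\<in>mi_level d N. fact N / mfact d n * (norm (mpow d adj_op n x))\<^sup>2) \<longlonglongrightarrow> 0"
        by simp
    qed (use LIMSEQ_unique[OF lim] in blast)
    finally show ?thesis .
  qed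
  then show ?thesis
    by (simp add: isometrically_included_def)
qed

end

theorem theorem3p16:
  fixes d :: nat
    and \<iota> :: "'m::chilbert \<Rightarrow> ((nat \<Rightarrow> nat) \<Rightarrow> 'y::chilbert)"
  assumes d_pos: "1 \<le> d"
    and lin: "fun_clinear \<iota>"
    and inj: "inj \<iota>"
    and sub: "range \<iota> \<subseteq> arv d"
    and inv_adj: "\<forall>j<d. \<forall>m. arv_adj d j (\<iota> m) \<in> range \<iota>"
  shows
    "((\<forall>m. (\<Sum>j<d. (norm (inv \<iota> (arv_adj d j (\<iota> m))))\<^sup>2)
              \<le> (norm m)\<^sup>2 - (norm (\<iota> m (\<lambda>_. 0)))\<^sup>2) \<longrightarrow>
        (\<exists>(C :: 'm \<Rightarrow> 'y) (A :: nat \<Rightarrow> 'm \<Rightarrow> 'm).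
            contractive_pair d C A \<and> commutative_tuple d A \<and>
            range \<iota> = range (obs d C A) \<and> exactly_observable \<iota> d C A)
        \<and> contractively_included \<iota> d)
   \<and>
     ((\<forall>m. (\<Sum>j<d. (norm (inv \<iota> (arv_adj d j (\<iota> m))))\<^sup>2)
              = (norm m)\<^sup>2 - (norm (\<iota> m (\<lambda>_. 0)))\<^sup>2) \<longrightarrow>
        (\<exists>(C :: 'm \<Rightarrow> 'y) (A :: nat \<Rightarrow> 'm \<Rightarrow> 'm).
            isometric_pair d C A \<and> commutative_tuple d A \<and>
            range \<iota> = range (obs d C A) \<and> exactly_observable \<iota> d C A)
        \<and> contractively_included \<iota> d
        \<and> (isometrically_included \<iota> d \<longleftrightarrow>
             (\<forall>m. (\<lambda>N. \<Sum>n\<in>{n\<in>mi d. mabs d n = N}.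
                      (fact N / real (mfact d n)) *
                      (norm (inv \<iota> (mpow d (arv_adj d) n (\<iota> m))))\<^sup>2)
                   \<longlonglongrightarrow> 0)))"
proof -
  interpret backward_shift_invariant d \<iota>
    using lin inj sub inv_adj by unfold_locales
  have contractive: "(\<forall>m. (\<Sum>j<d. (norm (inv \<iota> (arv_adj d j (\<iota> m))))\<^sup>2)
      \<le> (norm m)\<^sup>2 - (norm (\<iota> m (\<lambda>_. 0)))\<^sup>2) \<longleftrightarrow> contractive_pair d eval_origin adj_op"
    by (simp add: contractive_pair_adj_op_iff adj_op_def eval_origin_def func_zero le_diff_eq add.commute)
  have isometric: "(\<forall>m. (\<Sum>j<d. (norm (inv \<iota> (arv_adj d j (\<iota> m))))\<^sup>2)
      = (norm m)\<^sup>2 - (norm (\<iota> m (\<lambda>_. 0)))\<^sup>2) \<longleftrightarrow> isometric_pair d eval_origin adj_op"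
    by (simp add: isometric_pair_adj_op_iff adj_op_def eval_origin_def func_zero eq_diff_eq add.commute)
  have tail: "(\<lambda>N. \<Sum>n\<in>{n\<in>mi d. mabs d n = N}. (fact N / real (mfact d n)) *
      (norm (inv \<iota> (mpow d (arv_adj d) n (\<iota> m))))\<^sup>2)
    = (\<lambda>N. \<Sum>n\<in>mi_level d N. fact N / mfact d n * (norm (mpow d adj_op n m))\<^sup>2)" for m
    by (simp add: mi_level_def mpow_arv_adj_embedding inv_f_f[OF inj])
  have realization: "commutative_tuple d adj_op \<and> range \<iota> = range (obs d eval_origin adj_op)
      \<and> exactly_observable \<iota> d eval_origin adj_op"
    by (simp add: commutative_tuple_adj_op obs_eq_embedding exactly_observable_embedding)
  show ?thesis
    unfolding contractive isometric tail
    using realization contractively_included_if_contractive isometrically_included_iff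
      contractive_pair_if_isometric by blast
qed

end
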